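(* Let $f$ be a multiplicative function from the positive integers to the nonnegative integers with $f(p^{k-1})\le f(p^k)$ for all primes $p$ and integers $k\ge1$. Let $n$ be $f$-practical, let $p$ be a prime with $\gcd(p,n)=1$, and let $k\ge1$. Then $np^k$ is $f$-practical if and only if $f(p^i)\le S_f(np^{i-1})+1$ for all $1\le i\le k$.
   Context: $f$ multiplicative means $f(1)=1$ and $f(ab)=f(a)f(b)$ for coprime $a,b$. $S_f(n)=\sum_{d\mid n} f(d)$. A positive integer $n$ is $f$-practical if every positive integer $m\le S_f(n)$ equals $\sum_{d\in\mathcal{D}}f(d)$ for some set $\mathcal{D}$ of distinct divisors of $n$. *)

theory Defs
  imports "HOL-Computational_Algebra.Primes"
begin

definition multiplicative :: "(nat \<Rightarrow> nat) \<Rightarrow> bool" where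
  "multiplicative f \<longleftrightarrow> f 1 = 1 \<and>
     (\<forall>a b. 0 < a \<longrightarrow> 0 < b \<longrightarrow> coprime a b \<longrightarrow> f (a * b) = f a * f b)"

definition S_f :: "(nat \<Rightarrow> nat) \<Rightarrow> nat \<Rightarrow> nat" where
  "S_f f n = (\<Sum>d | d dvd n. f d)"

definition f_practical :: "(nat \<Rightarrow> nat) \<Rightarrow> nat \<Rightarrow> bool" where
  "f_practical f n \<longleftrightarrow> 0 < n \<and>
     (\<forall>m. 0 < m \<and> m \<le> S_f f n \<longrightarrow>
        (\<exists>D. D \<subseteq> {d. d dvd n} \<and> m = (\<Sum>d\<in>D. f d)))"

end

theory Submission
  imports Defs
begin

text \<open>
  The divisors of \<open>n p^i\<close> are those of \<open>n p^(i-1)\<close> together with the products \<open>d p^i\<close>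
  with \<open>d\<close> dividing \<open>n\<close>, so \<open>S_f(n p^i) = S_f(n p^(i-1)) + f(p^i) S_f(n)\<close>. If
  \<open>f(p^i) \<le> S_f(n p^(i-1)) + 1\<close>, every \<open>m \<le> S_f(n p^i)\<close> is \<open>r + f(p^i) t\<close> with
  \<open>r \<le> S_f(n p^(i-1))\<close> and \<open>t \<le> S_f(n)\<close>, and representing \<open>r\<close> and \<open>t\<close> by induction
  on \<open>i\<close> shows that \<open>n p^i\<close> is \<open>f\<close>-practical. Conversely, since \<open>f\<close> is monotone on powers
  of \<open>p\<close>, a divisor of \<open>n p^k\<close> that does not divide \<open>n p^(i-1)\<close> has \<open>f\<close>-value \<open>0\<close> or at
  least \<open>f(p^i)\<close>; so if \<open>f(p^i) > S_f(n p^(i-1)) + 1\<close>, the number \<open>S_f(n p^(i-1)) + 1\<close> is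
  not a sum of values of \<open>f\<close> at distinct divisors of \<open>n p^k\<close>.
\<close>

lemma coprime_prime_imp_pos:
  fixes p n :: nat
  assumes "prime p" "coprime p n"
  shows "0 < n"
  using assms by (metis coprime_0_right_iff gr0I not_prime_unit)

lemma dvd_mult_prime_power_decompose:
  fixes n p k x :: nat
  assumes "prime p" "coprime p n" "x dvd n * p ^ k"
  obtains y j where "y dvd n" "j \<le> k" "x = y * p ^ j"
proof -
  have "n * p ^ k \<noteq> 0"
    using coprime_prime_imp_pos[OF assms(1,2)] prime_gt_0_nat[OF assms(1)] by simp
  then have "x \<noteq> 0" using assms(3) by (metis dvd_0_left_iff)
  moreover have "\<not> is_unit p" using assms(1) by (blast dest: not_prime_unit)
  ultimately obtain y where y: "x = p ^ multiplicity p x * y" "\<not> p dvd y"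
    by (rule multiplicity_decompose')
  define j where "j = multiplicity p x"
  have "coprime y (p ^ k)"
    using y(2) assms(1) by (simp add: prime_imp_coprime coprime_commute)
  moreover have "y dvd n * p ^ k" using assms(3) by (subst (asm) y(1)) (rule dvd_mult_right)
  ultimately have "y dvd n" using coprime_dvd_mult_left_iff by blast
  have "p ^ j dvd n * p ^ k" using assms(3) unfolding j_def by (subst (asm) y(1)) (rule dvd_mult_left)
  moreover have "coprime (p ^ j) n" using assms(2) by simp
  ultimately have "p ^ j dvd p ^ k" using coprime_dvd_mult_right_iff by blast
  then have "j \<le> k" using power_dvd_imp_le prime_gt_1_nat[OF assms(1)] by blast
  with \<open>y dvd n\<close> y(1) j_def show thesis by (metis mult.commute that)
qed

lemma mult_prime_power_Suc_not_dvd: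
  fixes n p d i :: nat
  assumes "prime p" "coprime p n"
  shows "\<not> d * p ^ Suc i dvd n * p ^ i"
proof
  assume "d * p ^ Suc i dvd n * p ^ i"
  then have "p ^ i * p dvd p ^ i * n" by (metis dvd_mult_right mult.commute power_Suc2)
  then have "p dvd n" using prime_gt_0_nat[OF assms(1)] by simp
  then show False using assms by (metis coprime_absorb_left not_prime_unit)
qed

lemma multiplicative_mult_prime_power:
  fixes f :: "nat \<Rightarrow> nat" and n p d j :: nat
  assumes "multiplicative f" "prime p" "coprime p n" "d dvd n"
  shows "f (d * p ^ j) = f d * f (p ^ j)"
proof -
  have "0 < d" using assms(4) coprime_prime_imp_pos[OF assms(2,3)] by (auto intro: gr0I)
  moreover have "coprime d (p ^ j)"
    using assms(3,4) by (metis coprime_commute coprime_power_right_iff coprime_imp_coprime dvd_trans)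
  ultimately show ?thesis
    using assms(1) prime_gt_0_nat[OF assms(2)] unfolding multiplicative_def by simp
qed

lemma sum_mult_prime_power_image:
  fixes f :: "nat \<Rightarrow> nat" and n p j :: nat
  assumes "multiplicative f" "prime p" "coprime p n" "E \<subseteq> {d. d dvd n}"
  shows "sum f ((\<lambda>d. d * p ^ j) ` E) = f (p ^ j) * sum f E"
proof -
  have "inj_on (\<lambda>d. d * p ^ j) E" using prime_gt_0_nat[OF assms(2)] by (auto simp: inj_on_def)
  then have "sum f ((\<lambda>d. d * p ^ j) ` E) = (\<Sum>d\<in>E. f (d * p ^ j))" by (simp add: sum.reindex)
  also have "\<dots> = (\<Sum>d\<in>E. f (p ^ j) * f d)"
    using assms multiplicative_mult_prime_power by (intro sum.cong) (auto simp: mult.commute)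
  finally show ?thesis by (simp add: sum_distrib_left)
qed

lemma divisors_mult_prime_power_Suc:
  fixes n p i :: nat
  assumes "prime p" "coprime p n"
  shows "{d. d dvd n * p ^ Suc i} = {d. d dvd n * p ^ i} \<union> (\<lambda>d. d * p ^ Suc i) ` {d. d dvd n}"
proof (intro set_eqI iffI)
  fix x assume "x \<in> {d. d dvd n * p ^ Suc i}"
  then obtain y j where yj: "y dvd n" "j \<le> Suc i" "x = y * p ^ j"
    using dvd_mult_prime_power_decompose[OF assms] by blast
  show "x \<in> {d. d dvd n * p ^ i} \<union> (\<lambda>d. d * p ^ Suc i) ` {d. d dvd n}"
  proof (cases "j = Suc i")
    case False
    then have "p ^ j dvd p ^ i" using yj(2) by (simp add: le_imp_power_dvd)
    then show ?thesis using yj by (simp add: mult_dvd_mono)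
  qed (use yj in auto)
next
  fix x assume "x \<in> {d. d dvd n * p ^ i} \<union> (\<lambda>d. d * p ^ Suc i) ` {d. d dvd n}"
  moreover have "n * p ^ i dvd n * p ^ Suc i" by simp
  ultimately show "x \<in> {d. d dvd n * p ^ Suc i}" by (auto intro: dvd_trans mult_dvd_mono)
qed

lemma S_f_mult_prime_power_Suc:
  fixes f :: "nat \<Rightarrow> nat" and n p i :: nat
  assumes "multiplicative f" "prime p" "coprime p n"
  shows "S_f f (n * p ^ Suc i) = S_f f (n * p ^ i) + f (p ^ Suc i) * S_f f n"
proof -
  have pos: "0 < n" "0 < p" using coprime_prime_imp_pos[OF assms(2,3)] prime_gt_0_nat[OF assms(2)] .
  have "{d. d dvd n * p ^ i} \<inter> (\<lambda>d. d * p ^ Suc i) ` {d. d dvd n} = {}"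
    using mult_prime_power_Suc_not_dvd[OF assms(2,3)] by blast
  then have "S_f f (n * p ^ Suc i)
      = S_f f (n * p ^ i) + sum f ((\<lambda>d. d * p ^ Suc i) ` {d. d dvd n})"
    unfolding S_f_def divisors_mult_prime_power_Suc[OF assms(2,3)] using pos
    by (simp add: sum.union_disjoint)
  then show ?thesis
    unfolding S_f_def using sum_mult_prime_power_image[OF assms order_refl] by (simp del: power_Suc)
qed

text \<open>Writing \<open>m\<close> in the mixed radix \<open>q\<close>, with the top digit capped at \<open>b\<close>.\<close>
lemma le_add_mult_decompose:
  fixes m a b q :: nat
  assumes "m \<le> a + q * b" "0 < q" "q \<le> a + 1"
  obtains r t where "r \<le> a" "t \<le> b" "m = r + q * t"
proof (cases "m div q \<le> b")
  case True
  have "m mod q \<le> a" using assms(2,3) mod_less_divisor[of q m] by linarith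
  with True show thesis by (intro that[of "m mod q" "m div q"]) simp_all
next
  case False
  then have "q * b \<le> q * (m div q)" by simp
  also have "\<dots> \<le> m" by simp
  finally show thesis using assms(1) by (intro that[of "m - q * b" b]) simp_all
qed

lemma f_practical_sum_divisors:
  assumes "f_practical f n" "m \<le> S_f f n"
  obtains D where "D \<subseteq> {d. d dvd n}" "m = sum f D"
proof (cases "m = 0")
  case True then show thesis by (intro that[of "{}"]) simp_all
next
  case False then show thesis using assms that unfolding f_practical_def by auto
qed

lemma f_practical_mult_prime_power_Suc:
  fixes f :: "nat \<Rightarrow> nat" and n p i :: nat
  assumes mult: "multiplicative f" and p: "prime p" "coprime p n"
    and practical: "f_practical f n" "f_practical f (n * p ^ i)"
    and pos: "0 < f (p ^ Suc i)" and bound: "f (p ^ Suc i) \<le> S_f f (n * p ^ i) + 1"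
  shows "f_practical f (n * p ^ Suc i)"
  unfolding f_practical_def
proof (intro conjI allI impI)
  have "0 < n" "0 < p" using coprime_prime_imp_pos[OF p] prime_gt_0_nat[OF p(1)] .
  then show "0 < n * p ^ Suc i" by simp
  fix m assume "0 < m \<and> m \<le> S_f f (n * p ^ Suc i)"
  then obtain r t where rt: "r \<le> S_f f (n * p ^ i)" "t \<le> S_f f n" "m = r + f (p ^ Suc i) * t"
    using le_add_mult_decompose pos bound S_f_mult_prime_power_Suc[OF mult p] by metis
  obtain R where R: "R \<subseteq> {d. d dvd n * p ^ i}" "r = sum f R"
    using f_practical_sum_divisors[OF practical(2) rt(1)] .
  obtain T where T: "T \<subseteq> {d. d dvd n}" "t = sum f T"
    using f_practical_sum_divisors[OF practical(1) rt(2)] .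
  let ?T = "(\<lambda>d. d * p ^ Suc i) ` T"
  have "finite R" "finite T" using R(1) T(1) \<open>0 < n\<close> \<open>0 < p\<close> by (auto intro: finite_subset)
  moreover have "R \<inter> ?T = {}" using R(1) T(1) mult_prime_power_Suc_not_dvd[OF p] by blast
  ultimately have "sum f (R \<union> ?T) = r + f (p ^ Suc i) * t"
    using R(2) T sum_mult_prime_power_image[OF mult p T(1)] by (simp add: sum.union_disjoint del: power_Suc)
  moreover have "R \<union> ?T \<subseteq> {d. d dvd n * p ^ Suc i}"
    using R(1) T(1) divisors_mult_prime_power_Suc[OF p] by blast
  ultimately show "\<exists>D. D \<subseteq> {d. d dvd n * p ^ Suc i} \<and> m = sum f D" using rt(3) by metis
qed

lemma f_practical_mult_prime_power:
  fixes f :: "nat \<Rightarrow> nat" and n p k :: nat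
  assumes mult: "multiplicative f" and p: "prime p" "coprime p n" and practical: "f_practical f n"
    and pos: "\<And>j. 0 < f (p ^ j)"
    and bound: "\<And>i. i < k \<Longrightarrow> f (p ^ Suc i) \<le> S_f f (n * p ^ i) + 1"
  shows "f_practical f (n * p ^ k)"
  using bound
proof (induction k)
  case 0
  then show ?case using practical by simp
next
  case (Suc k)
  then have "f_practical f (n * p ^ k)" by simp
  moreover have "f (p ^ Suc k) \<le> S_f f (n * p ^ k) + 1" using Suc.prems by (simp del: power_Suc)
  ultimately show ?case using f_practical_mult_prime_power_Suc[OF mult p practical] pos by blast
qed

lemma f_divisor_ge_prime_power:
  fixes f :: "nat \<Rightarrow> nat" and n p i k x :: nat
  assumes mult: "multiplicative f" and p: "prime p" "coprime p n" and mono: "mono (\<lambda>j. f (p ^ j))"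
    and x: "x dvd n * p ^ k" "\<not> x dvd n * p ^ i" "f x \<noteq> 0"
  shows "f (p ^ Suc i) \<le> f x"
proof -
  obtain y j where yj: "y dvd n" "j \<le> k" "x = y * p ^ j"
    using dvd_mult_prime_power_decompose[OF p x(1)] .
  have "Suc i \<le> j"
  proof (rule ccontr)
    assume "\<not> Suc i \<le> j"
    then have "p ^ j dvd p ^ i" by (simp add: le_imp_power_dvd)
    then show False using x(2) yj by (simp add: mult_dvd_mono)
  qed
  then have "f (p ^ Suc i) \<le> f (p ^ j)" using mono by (rule monoD[of "\<lambda>j. f (p ^ j)", rotated])
  moreover have "f x = f y * f (p ^ j)" using multiplicative_mult_prime_power[OF mult p yj(1)] yj(3) by simp
  ultimately show ?thesis using x(3) by (cases "f y") auto
qed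

lemma sum_divisors_gap:
  fixes f :: "nat \<Rightarrow> nat" and n p i k :: nat
  assumes mult: "multiplicative f" and p: "prime p" "coprime p n" and mono: "mono (\<lambda>j. f (p ^ j))"
    and D: "D \<subseteq> {d. d dvd n * p ^ k}"
  shows "sum f D \<le> S_f f (n * p ^ i) \<or> f (p ^ Suc i) \<le> sum f D"
proof -
  let ?A = "{d. d dvd n * p ^ i}"
  have pos: "0 < n" "0 < p" using coprime_prime_imp_pos[OF p] prime_gt_0_nat[OF p(1)] .
  have "finite D" using D pos by (auto intro: finite_subset)
  show ?thesis
  proof (cases "\<exists>x\<in>D - ?A. f x \<noteq> 0")
    case True
    then obtain x where x: "x \<in> D" "\<not> x dvd n * p ^ i" "f x \<noteq> 0" by auto
    have "f (p ^ Suc i) \<le> f x" using f_divisor_ge_prime_power[OF mult p mono] x D by auto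
    also have "\<dots> \<le> sum f D" using \<open>finite D\<close> x(1) by (intro member_le_sum) auto
    finally show ?thesis ..
  next
    case False
    then have "sum f D = sum f (D \<inter> ?A)"
      using \<open>finite D\<close> sum.Int_Diff[of D f ?A] sum.neutral[of "D - ?A" f] by auto
    also have "\<dots> \<le> S_f f (n * p ^ i)" unfolding S_f_def using pos by (intro sum_mono2) auto
    finally show ?thesis ..
  qed
qed

lemma f_practical_mult_prime_power_imp_bound:
  fixes f :: "nat \<Rightarrow> nat" and n p i k :: nat
  assumes mult: "multiplicative f" and p: "prime p" "coprime p n" and mono: "mono (\<lambda>j. f (p ^ j))"
    and practical: "f_practical f (n * p ^ k)" and "i < k"
  shows "f (p ^ Suc i) \<le> S_f f (n * p ^ i) + 1"
proof (rule ccontr)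
  assume big: "\<not> ?thesis"
  let ?A = "{d. d dvd n * p ^ i}"
  have pos: "0 < n" "0 < p" using coprime_prime_imp_pos[OF p] prime_gt_0_nat[OF p(1)] .
  have "p ^ Suc i \<notin> ?A" using mult_prime_power_Suc_not_dvd[OF p, of 1] by simp
  then have "S_f f (n * p ^ i) + f (p ^ Suc i) = sum f (insert (p ^ Suc i) ?A)"
    unfolding S_f_def using pos by simp
  also have "\<dots> \<le> S_f f (n * p ^ k)"
  proof -
    have "n * p ^ i dvd n * p ^ k" "p ^ Suc i dvd n * p ^ k"
      using \<open>i < k\<close> by (simp_all add: le_imp_power_dvd dvd_mult del: power_Suc)
    then show ?thesis unfolding S_f_def using pos by (intro sum_mono2) (auto intro: dvd_trans)
  qed
  finally have "S_f f (n * p ^ i) + 1 \<le> S_f f (n * p ^ k)" using big by linarith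
  then obtain D where D: "D \<subseteq> {d. d dvd n * p ^ k}" "S_f f (n * p ^ i) + 1 = sum f D"
    by (rule f_practical_sum_divisors[OF practical])
  show False using sum_divisors_gap[OF mult p mono D(1), of i] D(2) big by linarith
qed

theorem theorem2p5:
  fixes f :: "nat \<Rightarrow> nat" and n p k :: nat
  assumes "multiplicative f"
    and "\<And>q j. prime q \<Longrightarrow> 1 \<le> j \<Longrightarrow> f (q ^ (j - 1)) \<le> f (q ^ j)"
    and "f_practical f n"
    and "prime p" and "coprime p n"
    and "1 \<le> k"
  shows "f_practical f (n * p ^ k) \<longleftrightarrow>
           (\<forall>i. 1 \<le> i \<and> i \<le> k \<longrightarrow> f (p ^ i) \<le> S_f f (n * p ^ (i - 1)) + 1)"
proof -
  note mult = assms(1) and p = assms(4,5)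
  have mono: "mono (\<lambda>j. f (p ^ j))"
    unfolding mono_iff_le_Suc using assms(2)[OF assms(4), of "Suc _"] by simp
  have f_pos: "0 < f (p ^ i)" for i
    using monoD[OF mono, of 0 i] mult unfolding multiplicative_def by simp
  have "(\<forall>i. 1 \<le> i \<and> i \<le> k \<longrightarrow> f (p ^ i) \<le> S_f f (n * p ^ (i - 1)) + 1) \<longleftrightarrow>
        (\<forall>i<k. f (p ^ Suc i) \<le> S_f f (n * p ^ i) + 1)"
  proof (intro iffI allI impI)
    fix i assume "\<forall>i. 1 \<le> i \<and> i \<le> k \<longrightarrow> f (p ^ i) \<le> S_f f (n * p ^ (i - 1)) + 1" "i < k"
    then show "f (p ^ Suc i) \<le> S_f f (n * p ^ i) + 1" by (metis Suc_leI diff_Suc_1 le_add1 plus_1_eq_Suc)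
  next
    fix i assume "\<forall>i<k. f (p ^ Suc i) \<le> S_f f (n * p ^ i) + 1" "1 \<le> i \<and> i \<le> k"
    then show "f (p ^ i) \<le> S_f f (n * p ^ (i - 1)) + 1" by (cases i) auto
  qed
  moreover have "f_practical f (n * p ^ k)" if "\<forall>i<k. f (p ^ Suc i) \<le> S_f f (n * p ^ i) + 1"
    using f_practical_mult_prime_power[OF mult p assms(3) f_pos] that by blast
  ultimately show ?thesis
    using f_practical_mult_prime_power_imp_bound[OF mult p mono] by auto
qed

end
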